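(* Under the standing assumption, no two distinct small tiles touch, i.e. any two distinct small tiles are disjoint.
   Context: Standing assumption: let $n\ge 2$ and $0<p<q$ be real numbers. A tiling of $\mathbb{R}^n$ is a family of closed sets (tiles) whose union is $\mathbb{R}^n$ and whose pairwise intersections have Lebesgue measure zero. There are an invertible real $n\times n$ matrix $B$, an axis-parallel closed cube $S_0$ of side length $p$ and an axis-parallel closed cube $T_0$ of side length $q$ such that the family $\{S_0+Bz: z\in\mathbb{Z}^n\}\cup\{T_0+Bz: z\in\mathbb{Z}^n\}$ is a tiling of $\mathbb{R}^n$, and this tiling is unilateral, i.e. no two distinct tiles of the same side length share a full facet. Tiles of side length $p$ are called small, tiles of side length $q$ big. Two tiles touch if they intersect; they properly touch if their intersection has positive $(n-1)$-dimensional Lebesgue measure. *)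

theory Defs
  imports "HOL-Analysis.Analysis"
begin

definition cube :: "real^'n \<Rightarrow> real \<Rightarrow> (real^'n) set" where
  "cube a s = {x. \<forall>i. a$i \<le> x$i \<and> x$i \<le> a$i + s}"

definition latvec :: "real^'n^'n \<Rightarrow> int^'n \<Rightarrow> real^'n" where
  "latvec B z = B *v (\<chi> i. of_int (z$i))"

definition lattice_translates :: "real^'n^'n \<Rightarrow> (real^'n) set \<Rightarrow> (real^'n) set set" where
  "lattice_translates B S = {(\<lambda>x. latvec B z + x) ` S | z. True}"

definition is_tiling :: "(real^'n) set set \<Rightarrow> bool" where
  "is_tiling F \<longleftrightarrow> (\<forall>T\<in>F. closed T) \<and> \<Union>F = UNIV \<and>
     (\<forall>T\<in>F. \<forall>T'\<in>F. T \<noteq> T' \<longrightarrow> negligible (T \<inter> T'))"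

definition share_facet :: "(real^'n) set \<Rightarrow> (real^'n) set \<Rightarrow> bool" where
  "share_facet X Y \<longleftrightarrow> (\<exists>F. F facet_of X \<and> F facet_of Y)"

definition no_shared_facets :: "(real^'n) set set \<Rightarrow> bool" where
  "no_shared_facets F \<longleftrightarrow> (\<forall>X\<in>F. \<forall>Y\<in>F. X \<noteq> Y \<longrightarrow> \<not> share_facet X Y)"

end

theory Submission
  imports Defs
begin

text \<open>If two small tiles at lattice offsets \<open>u \<noteq> w\<close> met, then \<open>\<bar>u$i - w$i\<bar> \<le> p < q\<close> in every
  coordinate, so the big tiles at the same offsets would overlap in a nondegenerate box,
  contradicting the tiling property.\<close>

lemma translation_cube: "(\<lambda>x. u + x) ` cube a s = cube (a + u) s"
proof -
  have "(\<lambda>x. u + x) ` cube a s = {x. x - u \<in> cube a s}"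
    by (force simp: image_iff)
  also have "\<dots> = cube (a + u) s"
    by (auto simp: cube_def algebra_simps)
  finally show ?thesis .
qed

lemma lattice_translates_cube:
  "lattice_translates B (cube a s) = {cube (a + latvec B z) s | z. True}"
  by (simp add: lattice_translates_def translation_cube)

lemma cube_eq_imp_eq:
  assumes "0 \<le> s" and "cube a s = cube b s"
  shows "a = b"
proof -
  have "a \<in> cube b s" "b \<in> cube a s"
    using assms by (auto simp: cube_def)
  then show ?thesis
    by (auto simp: cube_def vec_eq_iff intro: order_antisym)
qed

lemma cube_inter_nonempty_imp_close:
  assumes "x \<in> cube a s \<inter> cube b s"
  shows "\<bar>a$i - b$i\<bar> \<le> s"
proof -
  have "a$i \<le> x$i" "x$i \<le> a$i + s" "b$i \<le> x$i" "x$i \<le> b$i + s"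
    using assms by (auto simp: cube_def)
  then show ?thesis by linarith
qed

lemma cube_inter_not_negligible:
  fixes a b :: "real^'n"
  assumes "\<And>i. \<bar>a$i - b$i\<bar> < s"
  shows "\<not> negligible (cube a s \<inter> cube b s)"
proof
  assume null: "negligible (cube a s \<inter> cube b s)"
  define c :: "real^'n" where "c = (\<chi> i. max (a$i) (b$i))"
  define e :: "real^'n" where "e = (\<chi> i. min (a$i) (b$i) + s)"
  have "box c e \<subseteq> cube a s \<inter> cube b s"
  proof
    fix x
    assume "x \<in> box c e"
    then have "max (a$i) (b$i) < x$i \<and> x$i < min (a$i) (b$i) + s" for i
      by (simp add: mem_box_cart c_def e_def)
    then show "x \<in> cube a s \<inter> cube b s"
      unfolding cube_def by (smt (verit) Int_iff mem_Collect_eq)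
  qed
  with null have "box c e = {}"
    using negligible_subset negligible_interval(2) by blast
  moreover have "c$i < e$i" for i
    using assms[of i] by (simp add: c_def e_def) linarith
  then have "(1/2) *\<^sub>R (c + e) \<in> box c e"
    by (simp add: mem_box_cart)
  ultimately show False by simp
qed

theorem lemma3:
  fixes p q :: real and B :: "real^'n^'n" and a b :: "real^'n"
  assumes "CARD('n) \<ge> 2"
    and "0 < p" and "p < q"
    and "invertible B"
    and "is_tiling (lattice_translates B (cube a p) \<union> lattice_translates B (cube b q))"
    and "no_shared_facets (lattice_translates B (cube a p))"
    and "no_shared_facets (lattice_translates B (cube b q))"
  shows "\<forall>X\<in>lattice_translates B (cube a p). \<forall>Y\<in>lattice_translates B (cube a p).
           X \<noteq> Y \<longrightarrow> X \<inter> Y = {}"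
proof (intro ballI impI)
  fix X Y
  assume "X \<in> lattice_translates B (cube a p)" "Y \<in> lattice_translates B (cube a p)" "X \<noteq> Y"
  moreover obtain zx zy where X: "X = cube (a + latvec B zx) p" and Y: "Y = cube (a + latvec B zy) p"
    using calculation(1,2) unfolding lattice_translates_cube by auto
  ultimately have "latvec B zx \<noteq> latvec B zy" by auto
  let ?TX = "cube (b + latvec B zx) q" and ?TY = "cube (b + latvec B zy) q"
  have big: "?TX \<in> lattice_translates B (cube b q)" "?TY \<in> lattice_translates B (cube b q)"
    unfolding lattice_translates_cube by blast+
  have "?TX \<noteq> ?TY"
  proof
    assume "?TX = ?TY"
    with assms(2,3) have "b + latvec B zx = b + latvec B zy"
      by (intro cube_eq_imp_eq[of q]) auto
    with \<open>latvec B zx \<noteq> latvec B zy\<close> show False by simp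
  qed
  with assms(5) big have null: "negligible (?TX \<inter> ?TY)"
    unfolding is_tiling_def by blast
  show "X \<inter> Y = {}"
  proof (rule ccontr)
    assume "X \<inter> Y \<noteq> {}"
    then obtain x where "x \<in> cube (a + latvec B zx) p \<inter> cube (a + latvec B zy) p"
      unfolding X Y by blast
    then have "\<bar>latvec B zx $ i - latvec B zy $ i\<bar> \<le> p" for i
      using cube_inter_nonempty_imp_close[of x "a + latvec B zx" p "a + latvec B zy" i] by simp
    with \<open>p < q\<close> have "\<not> negligible (?TX \<inter> ?TY)"
      by (intro cube_inter_not_negligible) (simp, meson order_le_less_trans)
    with null show False by blast
  qed
qed

end
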